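(* Let $X$ be a commutative topological free algebra over $\mathbb{K}$ with a set of free generators $A$. Let $B,C$ be a partition of $A$ and suppose $\alpha=|C|$ is infinite with $\alpha\ge w(X)$. Let $Y=\langle B\rangle$. Then $X\setminus Y$ is strongly $\alpha$-dense-algebrable, i.e., there is a set of free generators $F\subset X$ with $|F|=\alpha$ such that $\langle F\rangle$ is dense in $X$ and $\langle F\rangle\subset (X\setminus Y)\cup\{0\}$.
   Context: Algebras are associative linear algebras over $\mathbb{K}$ ($\mathbb{R}$ or $\mathbb{C}$); a topological algebra is an algebra with a topology making sum, product and scalar multiplication continuous. $w(X)$ is the smallest cardinality of a base of the topology. $\langle S\rangle$ is the subalgebra generated by $S$. With $\mathbb{P}_n$ the polynomials in $n$ variables without constant term, a subset $S$ of a commutative algebra is a set of free generators (SFG) if $P(x_1,\dots,x_n)\ne0$ for every $n$, every non-zero $P\in\mathbb{P}_n$ and all pairwise distinct $x_1,\dots,x_n\in S$. $X$ is a commutative (topological) free algebra with SFG $A$ if $A$ is an SFG and $X=\langle A\rangle$. A subset $M$ of a commutative topological algebra is strongly $\alpha$-dense-algebrable if $M\cup\{0\}$ contains a dense subalgebra of the form $\langle F\rangle$ with $F$ an SFG of cardinality $\alpha$ (a dense $\alpha$-generated free subalgebra). *)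

theory Defs
  imports "HOL-Analysis.Analysis"
begin

text \<open>The scalar field is a set K of complex numbers which is either
  the reals (K = \<real>) or all of \<complex>. The algebra X is a subset of an ambient
  commutative ring with unit of type 'a (every algebra embeds into its unitization,
  so this is no restriction); the unit is only used to write monomials with powers. The topology of X is the
  subspace topology (only its restriction to X matters).\<close>

definition is_subalgebra :: "complex set \<Rightarrow> (complex \<Rightarrow> 'a::comm_ring_1 \<Rightarrow> 'a) \<Rightarrow> 'a set \<Rightarrow> bool" where
  "is_subalgebra K scal Z \<longleftrightarrow>
     0 \<in> Z \<and> (\<forall>x\<in>Z. \<forall>y\<in>Z. x + y \<in> Z \<and> x * y \<in> Z) \<and> (\<forall>x\<in>Z. - x \<in> Z)
     \<and> (\<forall>k\<in>K. \<forall>x\<in>Z. scal k x \<in> Z)"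

definition gen :: "complex set \<Rightarrow> (complex \<Rightarrow> 'a::comm_ring_1 \<Rightarrow> 'a) \<Rightarrow> 'a set \<Rightarrow> 'a set" where
  "gen K scal S = \<Inter>{Z. S \<subseteq> Z \<and> is_subalgebra K scal Z}"

definition is_comm_algebra :: "complex set \<Rightarrow> (complex \<Rightarrow> 'a::comm_ring_1 \<Rightarrow> 'a) \<Rightarrow> 'a set \<Rightarrow> bool" where
  "is_comm_algebra K scal X \<longleftrightarrow> is_subalgebra K scal X \<and>
     (\<forall>k\<in>K. \<forall>x\<in>X. \<forall>y\<in>X. scal k (x + y) = scal k x + scal k y) \<and>
     (\<forall>k\<in>K. \<forall>l\<in>K. \<forall>x\<in>X. scal (k + l) x = scal k x + scal l x) \<and>
     (\<forall>k\<in>K. \<forall>l\<in>K. \<forall>x\<in>X. scal (k * l) x = scal k (scal l x)) \<and>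
     (\<forall>x\<in>X. scal 1 x = x) \<and>
     (\<forall>k\<in>K. \<forall>x\<in>X. \<forall>y\<in>X. scal k (x * y) = scal k x * y)"

definition is_comm_top_algebra :: "complex set \<Rightarrow> (complex \<Rightarrow> 'a::{comm_ring_1,topological_space} \<Rightarrow> 'a) \<Rightarrow> 'a set \<Rightarrow> bool" where
  "is_comm_top_algebra K scal X \<longleftrightarrow> is_comm_algebra K scal X \<and>
     continuous_on (X \<times> X) (\<lambda>(x, y). x + y) \<and>
     continuous_on (X \<times> X) (\<lambda>(x, y). x * y) \<and>
     continuous_on (K \<times> X) (\<lambda>(k, x). scal k x)"

text \<open>P_n: polynomials in n variables (indices < n) with coefficients in K and without
  constant term, given by their coefficient function on exponent vectors.\<close>
definition poly_n :: "complex set \<Rightarrow> nat \<Rightarrow> ((nat \<Rightarrow> nat) \<Rightarrow> complex) set" where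
  "poly_n K n = {P. finite {m. P m \<noteq> 0} \<and> (\<forall>m. P m \<in> K) \<and>
      (\<forall>m. P m \<noteq> 0 \<longrightarrow> (\<forall>i\<ge>n. m i = 0) \<and> m \<noteq> (\<lambda>_. 0))}"

definition poly_eval :: "(complex \<Rightarrow> 'a::comm_ring_1 \<Rightarrow> 'a) \<Rightarrow> nat \<Rightarrow> ((nat \<Rightarrow> nat) \<Rightarrow> complex) \<Rightarrow> (nat \<Rightarrow> 'a) \<Rightarrow> 'a" where
  "poly_eval scal n P x = (\<Sum>m\<in>{m. P m \<noteq> 0}. scal (P m) (\<Prod>i<n. x i ^ m i))"

definition is_SFG :: "complex set \<Rightarrow> (complex \<Rightarrow> 'a::comm_ring_1 \<Rightarrow> 'a) \<Rightarrow> 'a set \<Rightarrow> bool" where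
  "is_SFG K scal S \<longleftrightarrow>
     (\<forall>n. \<forall>P\<in>poly_n K n. \<forall>x. P \<noteq> (\<lambda>_. 0) \<and> (\<forall>i<n. x i \<in> S) \<and> inj_on x {..<n}
        \<longrightarrow> poly_eval scal n P x \<noteq> 0)"

definition is_base_of :: "'a::topological_space set \<Rightarrow> 'a set set \<Rightarrow> bool" where
  "is_base_of X Bs \<longleftrightarrow> (\<forall>V\<in>Bs. openin (subtopology euclidean X) V) \<and>
     (\<forall>U. openin (subtopology euclidean X) U \<longrightarrow> (\<exists>S\<subseteq>Bs. U = \<Union>S))"

end

theory Submission
  imports Defs
begin

text \<open>For each basic open set \<open>f c\<close> (\<open>c \<in> C\<close>) that meets \<open>B\<close>, pick \<open>b c\<close> in it and in \<open>B\<close>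
  and a real \<open>t c \<noteq> 0\<close> with \<open>t c \<cdot> c + b c\<close> still in it; otherwise take \<open>t c = 1\<close>, \<open>b c = 0\<close>.
  The substitution \<open>c \<mapsto> t c \<cdot> c + b c\<close>, fixing \<open>B\<close>, is a triangular change of free variables,
  so on every finitely generated piece it extends to an automorphism of the free algebra. Hence the
  perturbed generators \<open>F\<close> are again free, and an element of \<open>\<langle>F\<rangle> \<inter> \<langle>B\<rangle>\<close> is pulled back into
  \<open>\<langle>C\<rangle> \<inter> \<langle>B\<rangle> = {0}\<close>. The closure of \<open>\<langle>F\<rangle>\<close> is a subalgebra by continuity of the operations;
  it contains \<open>F\<close> and, by the choice of the perturbations, all of \<open>B\<close>; hence also every
  \<open>c = ((t c \<cdot> c + b c) - b c) / t c\<close>, and so all of \<open>X = \<langle>A\<rangle>\<close>.\<close>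

section \<open>Generated subalgebras\<close>

lemma gen_is_subalgebra: "is_subalgebra K scal (gen K scal S)"
  unfolding gen_def is_subalgebra_def by auto

lemma gen_least: "S \<subseteq> Z \<Longrightarrow> is_subalgebra K scal Z \<Longrightarrow> gen K scal S \<subseteq> Z"
  unfolding gen_def by auto

lemma gen_superset: "S \<subseteq> gen K scal S"
  unfolding gen_def by auto

lemma gen_mono: "S \<subseteq> T \<Longrightarrow> gen K scal S \<subseteq> gen K scal T"
  by (meson gen_is_subalgebra gen_least gen_superset order_trans)

lemma
  shows gen_zero [simp]: "0 \<in> gen K scal S"
    and gen_add: "x \<in> gen K scal S \<Longrightarrow> y \<in> gen K scal S \<Longrightarrow> x + y \<in> gen K scal S"
    and gen_mult: "x \<in> gen K scal S \<Longrightarrow> y \<in> gen K scal S \<Longrightarrow> x * y \<in> gen K scal S"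
    and gen_uminus: "x \<in> gen K scal S \<Longrightarrow> - x \<in> gen K scal S"
    and gen_scal: "k \<in> K \<Longrightarrow> x \<in> gen K scal S \<Longrightarrow> scal k x \<in> gen K scal S"
  using gen_is_subalgebra[of K scal S] unfolding is_subalgebra_def by blast+

lemma gen_induct [consumes 1, case_names generator zero add mult uminus scal]:
  assumes y: "y \<in> gen K scal S"
    and generator: "\<And>s. s \<in> S \<Longrightarrow> P s"
    and zero: "P 0"
    and add: "\<And>x y. x \<in> gen K scal S \<Longrightarrow> y \<in> gen K scal S \<Longrightarrow> P x \<Longrightarrow> P y \<Longrightarrow> P (x + y)"
    and mult: "\<And>x y. x \<in> gen K scal S \<Longrightarrow> y \<in> gen K scal S \<Longrightarrow> P x \<Longrightarrow> P y \<Longrightarrow> P (x * y)"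
    and uminus: "\<And>x. x \<in> gen K scal S \<Longrightarrow> P x \<Longrightarrow> P (- x)"
    and scal: "\<And>k x. k \<in> K \<Longrightarrow> x \<in> gen K scal S \<Longrightarrow> P x \<Longrightarrow> P (scal k x)"
  shows "P y"
proof -
  have "is_subalgebra K scal {x \<in> gen K scal S. P x}"
    unfolding is_subalgebra_def
    by (simp add: zero add mult uminus scal gen_add gen_mult gen_uminus gen_scal)
  moreover have "S \<subseteq> {x \<in> gen K scal S. P x}"
    using generator gen_superset by blast
  ultimately show ?thesis
    using gen_least y by blast
qed

lemma gen_finite_support:
  assumes "y \<in> gen K scal S"
  shows "\<exists>T\<subseteq>S. finite T \<and> y \<in> gen K scal T"
proof -
  have common: "\<exists>T\<subseteq>S. finite T \<and> x \<in> gen K scal T \<and> y \<in> gen K scal T"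
    if x: "\<exists>T\<subseteq>S. finite T \<and> x \<in> gen K scal T" and y: "\<exists>T\<subseteq>S. finite T \<and> y \<in> gen K scal T"
    for x y
  proof -
    obtain T1 T2 where "T1 \<subseteq> S" "finite T1" "x \<in> gen K scal T1" "T2 \<subseteq> S" "finite T2" "y \<in> gen K scal T2"
      using x y by metis
    then show ?thesis
      using gen_mono[of T1 "T1 \<union> T2" K scal] gen_mono[of T2 "T1 \<union> T2" K scal]
      by (intro exI[of _ "T1 \<union> T2"]) auto
  qed
  show ?thesis
    using assms
  proof (induction rule: gen_induct)
    case (generator s)
    then show ?case
      using gen_superset[of "{s}"] by blast
  next
    case (add x y)
    then show ?case
      using common[of x y] gen_add by blast
  next
    case (mult x y)
    then show ?case
      using common[of x y] gen_mult by blast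
  next
    case zero
    show ?case
      by (intro exI[of _ "{}"]) simp
  next
    case (uminus x)
    then show ?case
      using gen_uminus by blast
  next
    case (scal k x)
    then show ?case
      using gen_scal by blast
  qed
qed

lemma subalgebra_sum: "is_subalgebra K scal Z \<Longrightarrow> (\<And>i. i \<in> I \<Longrightarrow> f i \<in> Z) \<Longrightarrow> sum f I \<in> Z"
  by (induction I rule: infinite_finite_induct) (auto simp: is_subalgebra_def)

lemma subalgebra_power: "is_subalgebra K scal Z \<Longrightarrow> x \<in> Z \<Longrightarrow> k > 0 \<Longrightarrow> x ^ k \<in> Z"
proof (induction k)
  case (Suc k)
  then show ?case
    by (cases "k = 0") (auto simp: is_subalgebra_def)
qed simp

lemma subalgebra_prod:
  "finite I \<Longrightarrow> I \<noteq> {} \<Longrightarrow> is_subalgebra K scal Z \<Longrightarrow> (\<And>i. i \<in> I \<Longrightarrow> f i \<in> Z) \<Longrightarrow> prod f I \<in> Z"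
  by (induction I rule: finite_ne_induct) (auto simp: is_subalgebra_def)

section \<open>Polynomials\<close>

definition monomial_exponent :: "nat \<Rightarrow> (nat \<Rightarrow> nat) \<Rightarrow> bool" where
  "monomial_exponent n m \<longleftrightarrow> m \<noteq> (\<lambda>_. 0) \<and> (\<forall>i\<ge>n. m i = 0)"

definition monomial :: "nat \<Rightarrow> (nat \<Rightarrow> 'a::comm_ring_1) \<Rightarrow> (nat \<Rightarrow> nat) \<Rightarrow> 'a" where
  "monomial n x m = (\<Prod>i<n. x i ^ m i)"

definition poly_var :: "nat \<Rightarrow> (nat \<Rightarrow> nat) \<Rightarrow> complex" where
  "poly_var i = (\<lambda>m. if m = (\<lambda>j. if j = i then 1 else 0) then 1 else 0)"

definition poly_mult :: "((nat \<Rightarrow> nat) \<Rightarrow> complex) \<Rightarrow> ((nat \<Rightarrow> nat) \<Rightarrow> complex) \<Rightarrow> (nat \<Rightarrow> nat) \<Rightarrow> complex" where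
  "poly_mult P Q m = (\<Sum>p\<in>{p \<in> {m. P m \<noteq> 0} \<times> {m. Q m \<noteq> 0}. (\<lambda>i. fst p i + snd p i) = m}. P (fst p) * Q (snd p))"

lemma poly_n_iff:
  "P \<in> poly_n K n \<longleftrightarrow> finite {m. P m \<noteq> 0} \<and> (\<forall>m. P m \<in> K) \<and> (\<forall>m. P m \<noteq> 0 \<longrightarrow> monomial_exponent n m)"
  unfolding poly_n_def monomial_exponent_def by auto

lemma poly_eval_monomial: "poly_eval scal n P x = (\<Sum>m | P m \<noteq> 0. scal (P m) (monomial n x m))"
  unfolding poly_eval_def monomial_def by simp

lemma poly_eval_cong: "(\<And>i. i < n \<Longrightarrow> x i = y i) \<Longrightarrow> poly_eval scal n P x = poly_eval scal n P y"
  unfolding poly_eval_def by (intro sum.cong prod.cong refl) auto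

lemma monomial_exponent_add:
  "monomial_exponent n m1 \<Longrightarrow> monomial_exponent n m2 \<Longrightarrow> monomial_exponent n (\<lambda>i. m1 i + m2 i)"
  unfolding monomial_exponent_def by (auto simp: fun_eq_iff)

lemma monomial_add: "monomial n x (\<lambda>i. m1 i + m2 i) = monomial n x m1 * monomial n x m2"
  unfolding monomial_def by (simp add: power_add prod.distrib)

text \<open>The unit of the ambient ring need not lie in a subalgebra, so a monomial is
  rewritten as a product over the variables that actually occur in it.\<close>

lemma monomial_eq_prod_support:
  assumes "monomial_exponent n m"
  shows "monomial n x m = (\<Prod>i | i < n \<and> m i \<noteq> 0. x i ^ m i)"
    and "{i. i < n \<and> m i \<noteq> 0} \<noteq> {}"
proof -
  show "monomial n x m = (\<Prod>i | i < n \<and> m i \<noteq> 0. x i ^ m i)"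
    unfolding monomial_def by (rule prod.mono_neutral_right) auto
  show "{i. i < n \<and> m i \<noteq> 0} \<noteq> {}"
    using assms unfolding monomial_exponent_def by (auto simp: fun_eq_iff) (metis leI less_irrefl)
qed

lemma monomial_in_subalgebra:
  assumes "is_subalgebra K scal Z" "monomial_exponent n m" "\<And>i. i < n \<Longrightarrow> x i \<in> Z"
  shows "monomial n x m \<in> Z"
  unfolding monomial_eq_prod_support(1)[OF assms(2)]
  using assms monomial_eq_prod_support(2)[OF assms(2)]
  by (intro subalgebra_prod subalgebra_power) auto

section \<open>Algebras over \<open>K\<close>\<close>

locale comm_algebra_K =
  fixes K :: "complex set" and scal :: "complex \<Rightarrow> 'a::comm_ring_1 \<Rightarrow> 'a" and X :: "'a set"
  assumes K: "K = \<real> \<or> K = UNIV"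
    and comm_algebra: "is_comm_algebra K scal X"
begin

lemma K_of_real [simp]: "complex_of_real r \<in> K"
  using K by auto

lemma K_numerals [simp]: "0 \<in> K" "1 \<in> K" "-1 \<in> K"
  using K_of_real[of 0] K_of_real[of 1] K_of_real[of "-1"] by simp_all

lemma K_add: "k \<in> K \<Longrightarrow> l \<in> K \<Longrightarrow> k + l \<in> K"
  using K by auto

lemma K_mult: "k \<in> K \<Longrightarrow> l \<in> K \<Longrightarrow> k * l \<in> K"
  using K by auto

lemma K_divide: "k \<in> K \<Longrightarrow> l \<in> K \<Longrightarrow> k / l \<in> K"
  using K by auto

lemma K_sum: "(\<And>i. i \<in> I \<Longrightarrow> f i \<in> K) \<Longrightarrow> sum f I \<in> K"
  using K sum_in_Reals by auto

lemma X_subalgebra: "is_subalgebra K scal X"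
  using comm_algebra unfolding is_comm_algebra_def by blast

lemma
  shows X_zero [simp]: "0 \<in> X"
    and X_add: "x \<in> X \<Longrightarrow> y \<in> X \<Longrightarrow> x + y \<in> X"
    and X_mult: "x \<in> X \<Longrightarrow> y \<in> X \<Longrightarrow> x * y \<in> X"
    and X_uminus: "x \<in> X \<Longrightarrow> - x \<in> X"
    and X_scal: "k \<in> K \<Longrightarrow> x \<in> X \<Longrightarrow> scal k x \<in> X"
  using X_subalgebra unfolding is_subalgebra_def by blast+

lemma X_diff: "x \<in> X \<Longrightarrow> y \<in> X \<Longrightarrow> x - y \<in> X"
  using X_add[of x "- y"] X_uminus[of y] by simp

lemma gen_subset_X: "S \<subseteq> X \<Longrightarrow> gen K scal S \<subseteq> X"
  by (rule gen_least[OF _ X_subalgebra])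

lemma
  shows scal_add_right: "k \<in> K \<Longrightarrow> x \<in> X \<Longrightarrow> y \<in> X \<Longrightarrow> scal k (x + y) = scal k x + scal k y"
    and scal_add_left: "k \<in> K \<Longrightarrow> l \<in> K \<Longrightarrow> x \<in> X \<Longrightarrow> scal (k + l) x = scal k x + scal l x"
    and scal_scal: "k \<in> K \<Longrightarrow> l \<in> K \<Longrightarrow> x \<in> X \<Longrightarrow> scal k (scal l x) = scal (k * l) x"
    and scal_one: "x \<in> X \<Longrightarrow> scal 1 x = x"
    and scal_mult_left: "k \<in> K \<Longrightarrow> x \<in> X \<Longrightarrow> y \<in> X \<Longrightarrow> scal k (x * y) = scal k x * y"
  using comm_algebra unfolding is_comm_algebra_def by auto

lemma scal_zero_left: "x \<in> X \<Longrightarrow> scal 0 x = 0"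
  using scal_add_left[of 0 0 x] by simp

lemma scal_zero_right: "k \<in> K \<Longrightarrow> scal k 0 = 0"
  using scal_add_right[of k 0 0] by simp

lemma scal_minus_one: "x \<in> X \<Longrightarrow> scal (-1) x = - x"
  using scal_add_left[of 1 "-1" x] scal_zero_left[of x] scal_one[of x]
  by (simp add: eq_neg_iff_add_eq_0 add.commute)

lemma scal_sum_right:
  "k \<in> K \<Longrightarrow> (\<And>i. i \<in> I \<Longrightarrow> f i \<in> X) \<Longrightarrow> scal k (sum f I) = (\<Sum>i\<in>I. scal k (f i))"
  by (induction I rule: infinite_finite_induct)
    (simp_all add: scal_zero_right scal_add_right subalgebra_sum[OF X_subalgebra])

lemma scal_sum_left:
  "x \<in> X \<Longrightarrow> (\<And>i. i \<in> I \<Longrightarrow> f i \<in> K) \<Longrightarrow> scal (sum f I) x = (\<Sum>i\<in>I. scal (f i) x)"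
  by (induction I rule: infinite_finite_induct) (simp_all add: scal_zero_left scal_add_left K_sum)

lemma scal_mult_scal:
  assumes "k \<in> K" "l \<in> K" "x \<in> X" "y \<in> X"
  shows "scal k x * scal l y = scal (k * l) (x * y)"
proof -
  have "scal k x * scal l y = scal l (scal k (x * y))"
    using assms scal_mult_left[of l y "scal k x"] scal_mult_left[of k x y]
    by (simp add: X_scal mult.commute)
  also have "\<dots> = scal (k * l) (x * y)"
    using assms by (simp add: scal_scal X_mult mult.commute)
  finally show ?thesis .
qed

lemma scal_inverse_cancel:
  assumes "k \<in> K" "k \<noteq> 0" "x \<in> X"
  shows "scal (1 / k) (scal k x) = x" and "scal k (scal (1 / k) x) = x"
  using assms by (simp_all add: scal_scal K_divide scal_one)

lemma poly_eval_in_subalgebra: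
  assumes Z: "is_subalgebra K scal Z" and P: "P \<in> poly_n K n" and x: "\<And>i. i < n \<Longrightarrow> x i \<in> Z"
  shows "poly_eval scal n P x \<in> Z"
  unfolding poly_eval_monomial
proof (rule subalgebra_sum[OF Z])
  fix m assume "m \<in> {m. P m \<noteq> 0}"
  then have "monomial_exponent n m" "P m \<in> K"
    using P unfolding poly_n_iff by auto
  moreover from this(1) have "monomial n x m \<in> Z"
    by (rule monomial_in_subalgebra[OF Z _ x])
  ultimately show "scal (P m) (monomial n x m) \<in> Z"
    using Z unfolding is_subalgebra_def by blast
qed

lemma poly_eval_eq_sum_superset:
  assumes P: "P \<in> poly_n K n" and M: "finite M" "{m. P m \<noteq> 0} \<subseteq> M" "\<And>m. m \<in> M \<Longrightarrow> monomial_exponent n m"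
    and x: "\<And>i. i < n \<Longrightarrow> x i \<in> X"
  shows "poly_eval scal n P x = (\<Sum>m\<in>M. scal (P m) (monomial n x m))"
  unfolding poly_eval_monomial
  by (rule sum.mono_neutral_left[OF M(1,2)])
    (use monomial_in_subalgebra[OF X_subalgebra M(3) x] scal_zero_left in auto)

lemma poly_n_zero: "(\<lambda>_. 0) \<in> poly_n K n"
  unfolding poly_n_iff by simp

lemma poly_eval_zero: "poly_eval scal n (\<lambda>_. 0) x = 0"
  unfolding poly_eval_def by simp

lemma poly_n_add:
  assumes "P \<in> poly_n K n" "Q \<in> poly_n K n"
  shows "(\<lambda>m. P m + Q m) \<in> poly_n K n"
proof -
  have "{m. P m + Q m \<noteq> 0} \<subseteq> {m. P m \<noteq> 0} \<union> {m. Q m \<noteq> 0}"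
    by auto
  with assms show ?thesis
    unfolding poly_n_iff by (metis (mono_tags, lifting) K_add add_0 finite_Un finite_subset)
qed

lemma poly_eval_add:
  assumes P: "P \<in> poly_n K n" and Q: "Q \<in> poly_n K n" and x: "\<And>i. i < n \<Longrightarrow> x i \<in> X"
  shows "poly_eval scal n (\<lambda>m. P m + Q m) x = poly_eval scal n P x + poly_eval scal n Q x"
proof -
  let ?M = "{m. P m \<noteq> 0} \<union> {m. Q m \<noteq> 0}"
  have M: "finite ?M" "\<And>m. m \<in> ?M \<Longrightarrow> monomial_exponent n m"
    using P Q unfolding poly_n_iff by auto
  have "poly_eval scal n (\<lambda>m. P m + Q m) x = (\<Sum>m\<in>?M. scal (P m + Q m) (monomial n x m))"
    by (rule poly_eval_eq_sum_superset[OF poly_n_add[OF P Q] M(1) _ M(2) x]) auto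
  also have "\<dots> = (\<Sum>m\<in>?M. scal (P m) (monomial n x m)) + (\<Sum>m\<in>?M. scal (Q m) (monomial n x m))"
    unfolding sum.distrib[symmetric] using P Q M(2)
    by (intro sum.cong refl scal_add_left monomial_in_subalgebra[OF X_subalgebra _ x])
      (auto simp: poly_n_iff)
  also have "\<dots> = poly_eval scal n P x + poly_eval scal n Q x"
    using poly_eval_eq_sum_superset[OF P M(1) _ M(2) x] poly_eval_eq_sum_superset[OF Q M(1) _ M(2) x]
    by auto
  finally show ?thesis .
qed

lemma poly_n_scale: "k \<in> K \<Longrightarrow> P \<in> poly_n K n \<Longrightarrow> (\<lambda>m. k * P m) \<in> poly_n K n"
  unfolding poly_n_iff by (auto intro: K_mult finite_subset[of _ "{m. P m \<noteq> 0}"])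

lemma poly_eval_scale:
  assumes k: "k \<in> K" and P: "P \<in> poly_n K n" and x: "\<And>i. i < n \<Longrightarrow> x i \<in> X"
  shows "poly_eval scal n (\<lambda>m. k * P m) x = scal k (poly_eval scal n P x)"
proof -
  let ?M = "{m. P m \<noteq> 0}"
  have M: "finite ?M" "\<And>m. m \<in> ?M \<Longrightarrow> monomial_exponent n m" and PK: "\<And>m. P m \<in> K"
    using P unfolding poly_n_iff by auto
  have mon: "\<And>m. m \<in> ?M \<Longrightarrow> monomial n x m \<in> X"
    using monomial_in_subalgebra[OF X_subalgebra M(2) x] .
  have "poly_eval scal n (\<lambda>m. k * P m) x = (\<Sum>m\<in>?M. scal (k * P m) (monomial n x m))"
    by (rule poly_eval_eq_sum_superset[OF poly_n_scale[OF k P] M(1) _ M(2) x]) auto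
  also have "\<dots> = (\<Sum>m\<in>?M. scal k (scal (P m) (monomial n x m)))"
    using k PK mon by (intro sum.cong refl) (simp add: scal_scal)
  also have "\<dots> = scal k (\<Sum>m\<in>?M. scal (P m) (monomial n x m))"
    using k PK mon by (intro scal_sum_right[symmetric]) (auto intro: X_scal)
  finally show ?thesis
    by (simp add: poly_eval_monomial)
qed

lemma poly_n_uminus: "P \<in> poly_n K n \<Longrightarrow> (\<lambda>m. - P m) \<in> poly_n K n"
  using poly_n_scale[of "-1"] by simp

lemma poly_eval_uminus:
  assumes P: "P \<in> poly_n K n" and x: "\<And>i. i < n \<Longrightarrow> x i \<in> X"
  shows "poly_eval scal n (\<lambda>m. - P m) x = - poly_eval scal n P x"
  using poly_eval_scale[of "-1", OF _ P x] scal_minus_one[OF poly_eval_in_subalgebra[OF X_subalgebra P x]]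
  by simp

lemma poly_var_support: "{m. poly_var i m \<noteq> 0} = {\<lambda>j. if j = i then 1 else 0}"
  unfolding poly_var_def by auto

lemma poly_n_var: "i < n \<Longrightarrow> poly_var i \<in> poly_n K n"
  unfolding poly_n_iff poly_var_support
  by (auto simp: poly_var_def monomial_exponent_def fun_eq_iff)

lemma poly_eval_var:
  assumes i: "i < n" and x: "x i \<in> X"
  shows "poly_eval scal n (poly_var i) x = x i"
proof -
  let ?d = "\<lambda>j. if j = i then 1 else (0::nat)"
  have "monomial n x ?d = x i"
    unfolding monomial_def using i by (simp add: if_distrib prod.delta cong: if_cong)
  then show ?thesis
    unfolding poly_eval_monomial poly_var_support using scal_one[OF x] by (simp add: poly_var_def)
qed

lemma poly_mult_support:
  "{m. poly_mult P Q m \<noteq> 0} \<subseteq> (\<lambda>p. \<lambda>i. fst p i + snd p i) ` ({m. P m \<noteq> 0} \<times> {m. Q m \<noteq> 0})"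
  unfolding poly_mult_def by (force intro: sum.neutral)

lemma poly_n_mult:
  assumes P: "P \<in> poly_n K n" and Q: "Q \<in> poly_n K n"
  shows "poly_mult P Q \<in> poly_n K n"
  unfolding poly_n_iff
proof (intro conjI allI impI)
  show "finite {m. poly_mult P Q m \<noteq> 0}"
    using P Q unfolding poly_n_iff by (blast intro: finite_subset[OF poly_mult_support])
  show "poly_mult P Q m \<in> K" for m
    using P Q unfolding poly_n_iff poly_mult_def by (blast intro: K_sum K_mult)
  show "monomial_exponent n m" if nonzero: "poly_mult P Q m \<noteq> 0" for m
  proof -
    obtain m1 m2 where "P m1 \<noteq> 0" "Q m2 \<noteq> 0" "m = (\<lambda>i. m1 i + m2 i)"
      using nonzero poly_mult_support[of P Q] by force
    then show ?thesis
      using P Q unfolding poly_n_iff by (simp add: monomial_exponent_add)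
  qed
qed

lemma poly_eval_mult:
  assumes P: "P \<in> poly_n K n" and Q: "Q \<in> poly_n K n" and x: "\<And>i. i < n \<Longrightarrow> x i \<in> X"
  shows "poly_eval scal n (poly_mult P Q) x = poly_eval scal n P x * poly_eval scal n Q x"
proof -
  define SP SQ where "SP = {m. P m \<noteq> 0}" and "SQ = {m. Q m \<noteq> 0}"
  define g where "g p = (\<lambda>i. fst p i + snd p i)" for p :: "(nat \<Rightarrow> nat) \<times> (nat \<Rightarrow> nat)"
  have fin: "finite SP" "finite SQ" and exp: "\<And>m. m \<in> SP \<union> SQ \<Longrightarrow> monomial_exponent n m"
    and PK: "\<And>m. P m \<in> K" and QK: "\<And>m. Q m \<in> K"
    using P Q unfolding poly_n_iff SP_def SQ_def by auto
  have expM: "monomial_exponent n m" if "m \<in> g ` (SP \<times> SQ)" for m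
    using that exp monomial_exponent_add unfolding g_def by fastforce
  have mon: "monomial n x m \<in> X" if "monomial_exponent n m" for m
    using that by (rule monomial_in_subalgebra[OF X_subalgebra _ x])
  have "poly_eval scal n P x * poly_eval scal n Q x
      = (\<Sum>m1\<in>SP. \<Sum>m2\<in>SQ. scal (P m1) (monomial n x m1) * scal (Q m2) (monomial n x m2))"
    by (simp add: poly_eval_monomial SP_def SQ_def sum_product)
  also have "\<dots> = (\<Sum>p\<in>SP \<times> SQ. scal (P (fst p) * Q (snd p)) (monomial n x (g p)))"
    unfolding sum.cartesian_product g_def
    by (intro sum.cong refl) (auto simp: scal_mult_scal PK QK mon exp monomial_add)
  also have "\<dots> = (\<Sum>m\<in>g ` (SP \<times> SQ). \<Sum>p | p \<in> SP \<times> SQ \<and> g p = m. scal (P (fst p) * Q (snd p)) (monomial n x m))"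
    by (subst sum.group[symmetric, OF _ finite_imageI, of _ _ g]) (use fin in auto)
  also have "\<dots> = (\<Sum>m\<in>g ` (SP \<times> SQ). scal (poly_mult P Q m) (monomial n x m))"
    unfolding poly_mult_def SP_def[symmetric] SQ_def[symmetric] g_def[symmetric]
    by (intro sum.cong refl scal_sum_left[symmetric]) (auto intro: K_mult PK QK mon expM)
  also have "\<dots> = poly_eval scal n (poly_mult P Q) x"
    using poly_mult_support[of P Q] fin expM unfolding SP_def SQ_def g_def
    by (intro poly_eval_eq_sum_superset[symmetric, OF poly_n_mult[OF P Q] _ _ _ x]) auto
  finally show ?thesis ..
qed

lemma gen_subset_poly_evals:
  assumes x: "\<And>i. i < n \<Longrightarrow> x i \<in> X"
  shows "gen K scal (x ` {..<n}) \<subseteq> (\<lambda>P. poly_eval scal n P x) ` poly_n K n"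
    (is "_ \<subseteq> ?R")
proof (rule gen_least)
  show "x ` {..<n} \<subseteq> ?R"
  proof
    fix y assume "y \<in> x ` {..<n}"
    then obtain i where "i < n" "y = x i"
      by blast
    then show "y \<in> ?R"
      using poly_eval_var[of i n x] x poly_n_var by (intro image_eqI[of _ _ "poly_var i"]) auto
  qed
  show "is_subalgebra K scal ?R"
    unfolding is_subalgebra_def
  proof (safe)
    show "0 \<in> ?R"
      using poly_eval_zero poly_n_zero by (intro image_eqI[of _ _ "\<lambda>_. 0"]) auto
  next
    fix P Q assume PQ: "P \<in> poly_n K n" "Q \<in> poly_n K n"
    show "poly_eval scal n P x + poly_eval scal n Q x \<in> ?R"
      using poly_eval_add[OF PQ x] poly_n_add[OF PQ] by (intro image_eqI[of _ _ "\<lambda>m. P m + Q m"]) auto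
    show "poly_eval scal n P x * poly_eval scal n Q x \<in> ?R"
      using poly_eval_mult[OF PQ x] poly_n_mult[OF PQ] by (intro image_eqI[of _ _ "poly_mult P Q"]) auto
  next
    fix P assume P: "P \<in> poly_n K n"
    show "- poly_eval scal n P x \<in> ?R"
      using poly_eval_uminus[OF P x] poly_n_uminus[OF P] by (intro image_eqI[of _ _ "\<lambda>m. - P m"]) auto
    show "scal k (poly_eval scal n P x) \<in> ?R" if k: "k \<in> K" for k
      using poly_eval_scale[OF k P x] poly_n_scale[OF k P] by (intro image_eqI[of _ _ "\<lambda>m. k * P m"]) auto
  qed
qed

section \<open>Homomorphisms\<close>

definition is_hom_on :: "'a set \<Rightarrow> ('a \<Rightarrow> 'a) \<Rightarrow> bool" where
  "is_hom_on D h \<longleftrightarrow> (\<forall>y\<in>D. \<forall>z\<in>D. h (y + z) = h y + h z) \<and>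
     (\<forall>y\<in>D. \<forall>z\<in>D. h (y * z) = h y * h z) \<and> (\<forall>y\<in>D. h (- y) = - h y) \<and>
     (\<forall>k\<in>K. \<forall>y\<in>D. h (scal k y) = scal k (h y)) \<and> h 0 = 0"

lemma
  assumes "is_hom_on D h"
  shows hom_add: "y \<in> D \<Longrightarrow> z \<in> D \<Longrightarrow> h (y + z) = h y + h z"
    and hom_mult: "y \<in> D \<Longrightarrow> z \<in> D \<Longrightarrow> h (y * z) = h y * h z"
    and hom_uminus: "y \<in> D \<Longrightarrow> h (- y) = - h y"
    and hom_scal: "k \<in> K \<Longrightarrow> y \<in> D \<Longrightarrow> h (scal k y) = scal k (h y)"
    and hom_zero: "h 0 = 0"
  using assms unfolding is_hom_on_def by auto

lemma is_hom_on_subset: "D' \<subseteq> D \<Longrightarrow> is_hom_on D h \<Longrightarrow> is_hom_on D' h"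
  unfolding is_hom_on_def by blast

lemma is_hom_on_id: "is_hom_on D (\<lambda>y. y)"
  unfolding is_hom_on_def by auto

lemma is_hom_on_zero: "is_hom_on D (\<lambda>_. 0)"
  unfolding is_hom_on_def by (simp add: scal_zero_right)

lemma is_hom_on_comp:
  "is_hom_on D h \<Longrightarrow> h ` D \<subseteq> D' \<Longrightarrow> is_hom_on D' g \<Longrightarrow> is_hom_on D (\<lambda>y. g (h y))"
  unfolding is_hom_on_def by (auto simp: image_subset_iff)

lemma hom_sum:
  assumes h: "is_hom_on D h" and D: "is_subalgebra K scal D" and f: "\<And>i. i \<in> I \<Longrightarrow> f i \<in> D"
  shows "h (sum f I) = (\<Sum>i\<in>I. h (f i))"
  using f
proof (induction I rule: infinite_finite_induct)
  case (insert i I)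
  then show ?case
    using hom_add[OF h] subalgebra_sum[OF D, of I f] by simp
qed (simp_all add: hom_zero[OF h])

lemma hom_prod:
  assumes h: "is_hom_on D h" and D: "is_subalgebra K scal D"
  shows "finite I \<Longrightarrow> I \<noteq> {} \<Longrightarrow> (\<And>i. i \<in> I \<Longrightarrow> f i \<in> D) \<Longrightarrow> h (prod f I) = (\<Prod>i\<in>I. h (f i))"
proof (induction I rule: finite_ne_induct)
  case (insert i I)
  then show ?case
    using hom_mult[OF h] subalgebra_prod[OF insert(1,2) D, of f] by simp
qed simp

lemma hom_power:
  assumes h: "is_hom_on D h" and D: "is_subalgebra K scal D" and x: "x \<in> D"
  shows "k > 0 \<Longrightarrow> h (x ^ k) = h x ^ k"
proof (induction k)
  case (Suc k)
  then show ?case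
    using hom_mult[OF h x] subalgebra_power[OF D x, of k] by (cases "k = 0") auto
qed simp

lemma hom_monomial:
  assumes h: "is_hom_on D h" and D: "is_subalgebra K scal D" and m: "monomial_exponent n m"
    and y: "\<And>i. i < n \<Longrightarrow> y i \<in> D"
  shows "h (monomial n y m) = monomial n (\<lambda>i. h (y i)) m"
  unfolding monomial_eq_prod_support(1)[OF m]
  using monomial_eq_prod_support(2)[OF m] y subalgebra_power[OF D y]
  by (subst hom_prod[OF h D]) (auto intro!: prod.cong hom_power[OF h D])

lemma hom_poly_eval:
  assumes h: "is_hom_on D h" and D: "is_subalgebra K scal D" and P: "P \<in> poly_n K n"
    and y: "\<And>i. i < n \<Longrightarrow> y i \<in> D"
  shows "h (poly_eval scal n P y) = poly_eval scal n P (\<lambda>i. h (y i))"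
proof -
  have m: "monomial_exponent n m" "P m \<in> K" "monomial n y m \<in> D" if "P m \<noteq> 0" for m
    using that P monomial_in_subalgebra[OF D _ y] unfolding poly_n_iff by auto
  then have "h (poly_eval scal n P y) = (\<Sum>m | P m \<noteq> 0. h (scal (P m) (monomial n y m)))"
    unfolding poly_eval_monomial using D
    by (intro hom_sum[OF h D]) (auto simp: is_subalgebra_def)
  also have "\<dots> = poly_eval scal n P (\<lambda>i. h (y i))"
    unfolding poly_eval_monomial using m
    by (intro sum.cong refl) (simp add: hom_scal[OF h] hom_monomial[OF h D _ y])
  finally show ?thesis .
qed

lemma hom_eq_on_gen:
  assumes h: "is_hom_on D h" and g: "is_hom_on D g" and S: "gen K scal S \<subseteq> D"
    and eq: "\<And>s. s \<in> S \<Longrightarrow> h s = g s" and y: "y \<in> gen K scal S"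
  shows "h y = g y"
  using y
proof (induction rule: gen_induct)
  case (add x y)
  then show ?case using S hom_add[OF h] hom_add[OF g] by (metis subsetD)
next
  case (mult x y)
  then show ?case using S hom_mult[OF h] hom_mult[OF g] by (metis subsetD)
next
  case (uminus x)
  then show ?case using S hom_uminus[OF h] hom_uminus[OF g] by (metis subsetD)
next
  case (scal k x)
  then show ?case using S hom_scal[OF h] hom_scal[OF g] by (metis subsetD)
qed (simp_all add: eq hom_zero[OF h] hom_zero[OF g])

lemma hom_gen_into_gen:
  assumes h: "is_hom_on D h" and S: "gen K scal S \<subseteq> D"
    and into: "\<And>s. s \<in> S \<Longrightarrow> h s \<in> gen K scal T" and y: "y \<in> gen K scal S"
  shows "h y \<in> gen K scal T"
  using y
proof (induction rule: gen_induct)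
  case (add x y)
  then show ?case using S hom_add[OF h] gen_add by (metis subsetD)
next
  case (mult x y)
  then show ?case using S hom_mult[OF h] gen_mult by (metis subsetD)
next
  case (uminus x)
  then show ?case using S hom_uminus[OF h] gen_uminus by (metis subsetD)
next
  case (scal k x)
  then show ?case using S hom_scal[OF h] gen_scal by (metis subsetD)
qed (simp_all add: into hom_zero[OF h])

lemma hom_inverse_on_gen:
  assumes H: "is_hom_on (gen K scal S) H" and H': "is_hom_on (gen K scal S) H'"
    and into: "\<And>s. s \<in> S \<Longrightarrow> H s \<in> gen K scal S" and inverse: "\<And>s. s \<in> S \<Longrightarrow> H' (H s) = s"
    and y: "y \<in> gen K scal S"
  shows "H' (H y) = y"
proof -
  have "H ` gen K scal S \<subseteq> gen K scal S"
    using hom_gen_into_gen[OF H order_refl into] by blast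
  then show ?thesis
    by (rule hom_eq_on_gen[OF is_hom_on_comp[OF H _ H'] is_hom_on_id order_refl _ y]) (simp add: inverse)
qed

lemma gen_image_subset_image_gen:
  assumes h: "is_hom_on D h" and S: "gen K scal S \<subseteq> D"
  shows "gen K scal (h ` S) \<subseteq> h ` gen K scal S"
proof (rule gen_least)
  show "h ` S \<subseteq> h ` gen K scal S"
    using gen_superset by blast
  show "is_subalgebra K scal (h ` gen K scal S)"
    unfolding is_subalgebra_def
  proof (safe)
    show "0 \<in> h ` gen K scal S"
      using hom_zero[OF h] gen_zero by (metis image_eqI)
  next
    fix a b assume ab: "a \<in> gen K scal S" "b \<in> gen K scal S"
    then show "h a + h b \<in> h ` gen K scal S" "h a * h b \<in> h ` gen K scal S"
      using S hom_add[OF h, of a b] hom_mult[OF h, of a b] gen_add[OF ab] gen_mult[OF ab]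
      by (metis image_eqI subsetD)+
  next
    fix a assume a: "a \<in> gen K scal S"
    then show "- h a \<in> h ` gen K scal S"
      using S hom_uminus[OF h, of a] gen_uminus[OF a] by (metis image_eqI subsetD)
    show "scal k (h a) \<in> h ` gen K scal S" if "k \<in> K" for k
      using S that hom_scal[OF h that, of a] gen_scal[OF that a] a by (metis image_eqI subsetD)
  qed
qed

end

section \<open>Free generators\<close>

locale free_generators = comm_algebra_K +
  fixes A :: "'a set"
  assumes free: "is_SFG K scal A"
    and A_subset_X: "A \<subseteq> X"
begin

lemma poly_eval_free_nonzero:
  assumes "P \<in> poly_n K n" "P \<noteq> (\<lambda>_. 0)" "\<And>i. i < n \<Longrightarrow> x i \<in> A" "inj_on x {..<n}"
  shows "poly_eval scal n P x \<noteq> 0"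
  using free assms unfolding is_SFG_def by blast

lemma poly_eval_free_inj:
  assumes P: "P \<in> poly_n K n" and Q: "Q \<in> poly_n K n"
    and x: "\<And>i. i < n \<Longrightarrow> x i \<in> A" "inj_on x {..<n}"
    and eq: "poly_eval scal n P x = poly_eval scal n Q x"
  shows "P = Q"
proof (rule ccontr)
  let ?D = "\<lambda>m. P m + - Q m"
  have xX: "\<And>i. i < n \<Longrightarrow> x i \<in> X"
    using x A_subset_X by blast
  assume "P \<noteq> Q"
  then have "?D \<noteq> (\<lambda>_. 0)"
    by (auto simp: fun_eq_iff add_eq_0_iff)
  then have "poly_eval scal n ?D x \<noteq> 0"
    using poly_eval_free_nonzero[OF poly_n_add[OF P poly_n_uminus[OF Q]] _ x] by blast
  moreover have "poly_eval scal n ?D x = 0"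
    using eq poly_eval_add[OF P poly_n_uminus[OF Q] xX] poly_eval_uminus[OF Q xX] by simp
  ultimately show False
    by contradiction
qed

text \<open>An element of the subalgebra generated by the free generators \<open>x\<close> is the value at \<open>x\<close> of a
  unique polynomial (\<open>poly_eval_free_inj\<close>); \<open>free_subst\<close> evaluates that polynomial at \<open>v\<close>.\<close>

definition free_subst :: "nat \<Rightarrow> (nat \<Rightarrow> 'a) \<Rightarrow> (nat \<Rightarrow> 'a) \<Rightarrow> 'a \<Rightarrow> 'a" where
  "free_subst n x v y = poly_eval scal n (SOME P. P \<in> poly_n K n \<and> y = poly_eval scal n P x) v"

lemma free_subst_poly_eval:
  assumes x: "\<And>i. i < n \<Longrightarrow> x i \<in> A" "inj_on x {..<n}" and P: "P \<in> poly_n K n"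
  shows "free_subst n x v (poly_eval scal n P x) = poly_eval scal n P v"
proof -
  let ?Q = "SOME Q. Q \<in> poly_n K n \<and> poly_eval scal n P x = poly_eval scal n Q x"
  have "?Q \<in> poly_n K n \<and> poly_eval scal n P x = poly_eval scal n ?Q x"
    by (rule someI[of _ P]) (simp add: P)
  then have "?Q = P"
    using poly_eval_free_inj[OF _ P x] by metis
  then show ?thesis
    unfolding free_subst_def by simp
qed

lemma is_hom_on_free_subst:
  assumes x: "\<And>i. i < n \<Longrightarrow> x i \<in> A" "inj_on x {..<n}" and v: "\<And>i. i < n \<Longrightarrow> v i \<in> X"
  shows "is_hom_on (gen K scal (x ` {..<n})) (free_subst n x v)"
proof -
  let ?h = "free_subst n x v" and ?ev = "\<lambda>P y. poly_eval scal n P y"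
  have xX: "\<And>i. i < n \<Longrightarrow> x i \<in> X"
    using x A_subset_X by blast
  have h: "?h (?ev P x) = ?ev P v" if "P \<in> poly_n K n" for P
    using free_subst_poly_eval[OF x that] .
  have "is_hom_on ((\<lambda>P. ?ev P x) ` poly_n K n) ?h"
    unfolding is_hom_on_def
  proof (safe)
    fix P Q assume P: "P \<in> poly_n K n" and Q: "Q \<in> poly_n K n"
    show "?h (?ev P x + ?ev Q x) = ?h (?ev P x) + ?h (?ev Q x)"
      using poly_eval_add[OF P Q xX] poly_eval_add[OF P Q v] h[OF poly_n_add[OF P Q]] h[OF P] h[OF Q]
      by simp
    show "?h (?ev P x * ?ev Q x) = ?h (?ev P x) * ?h (?ev Q x)"
      using poly_eval_mult[OF P Q xX] poly_eval_mult[OF P Q v] h[OF poly_n_mult[OF P Q]] h[OF P] h[OF Q]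
      by simp
    show "?h (- ?ev P x) = - ?h (?ev P x)"
      using poly_eval_uminus[OF P xX] poly_eval_uminus[OF P v] h[OF poly_n_uminus[OF P]] h[OF P]
      by simp
    show "?h (scal k (?ev P x)) = scal k (?h (?ev P x))" if k: "k \<in> K" for k
      using poly_eval_scale[OF k P xX] poly_eval_scale[OF k P v] h[OF poly_n_scale[OF k P]] h[OF P]
      by simp
  next
    show "?h 0 = 0"
      using h[OF poly_n_zero] by (simp add: poly_eval_zero)
  qed
  moreover have "gen K scal (x ` {..<n}) \<subseteq> (\<lambda>P. ?ev P x) ` poly_n K n"
    by (rule gen_subset_poly_evals) (rule xX)
  ultimately show ?thesis
    by (rule is_hom_on_subset[rotated])
qed

lemma free_hom_extension:
  assumes S: "finite S" "S \<subseteq> A" and u: "\<And>s. s \<in> S \<Longrightarrow> u s \<in> X"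
  shows "\<exists>h. is_hom_on (gen K scal S) h \<and> (\<forall>s\<in>S. h s = u s)"
proof -
  obtain n :: nat and x where x: "bij_betw x {..<n} S"
    using ex_bij_betw_nat_finite[OF S(1)] unfolding atLeast0LessThan by blast
  let ?v = "\<lambda>i. u (x i)"
  have xA: "\<And>i. i < n \<Longrightarrow> x i \<in> A" and inj: "inj_on x {..<n}" and S_eq: "S = x ` {..<n}"
    using x S(2) unfolding bij_betw_def by auto
  have v: "\<And>i. i < n \<Longrightarrow> ?v i \<in> X"
    using u S_eq by blast
  have "free_subst n x ?v (x i) = u (x i)" if "i < n" for i
    using free_subst_poly_eval[OF xA inj poly_n_var[OF that], of ?v] that xA A_subset_X v
    by (simp add: poly_eval_var subset_iff)
  moreover have "is_hom_on (gen K scal S) (free_subst n x ?v)"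
    unfolding S_eq by (rule is_hom_on_free_subst) (use xA inj v in auto)
  ultimately show ?thesis
    using S_eq by blast
qed

lemma poly_eval_hom_free_nonzero:
  assumes h: "is_hom_on (gen K scal S) h" "inj_on h (gen K scal S)" and S: "S \<subseteq> A"
    and P: "P \<in> poly_n K n" "P \<noteq> (\<lambda>_. 0)" and x: "\<And>i. i < n \<Longrightarrow> x i \<in> S" "inj_on x {..<n}"
  shows "poly_eval scal n P (\<lambda>i. h (x i)) \<noteq> 0"
proof -
  have x_gen: "\<And>i. i < n \<Longrightarrow> x i \<in> gen K scal S"
    using x(1) gen_superset by blast
  have "poly_eval scal n P x \<noteq> 0"
    using poly_eval_free_nonzero[OF P] x S by blast
  moreover have "poly_eval scal n P x \<in> gen K scal S"
    by (rule poly_eval_in_subalgebra[OF gen_is_subalgebra P(1) x_gen])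
  ultimately have "h (poly_eval scal n P x) \<noteq> h 0"
    using h(2) by (auto dest: inj_onD)
  then show ?thesis
    by (simp add: hom_poly_eval[OF h(1) gen_is_subalgebra P(1) x_gen] hom_zero[OF h(1)])
qed

lemma gen_Int_gen_free:
  assumes "S \<subseteq> A" "T \<subseteq> A" "S \<inter> T = {}"
  shows "gen K scal S \<inter> gen K scal T \<subseteq> {0}"
proof
  fix z assume "z \<in> gen K scal S \<inter> gen K scal T"
  then obtain S0 T0 where S0: "S0 \<subseteq> S" "finite S0" "z \<in> gen K scal S0"
    and T0: "T0 \<subseteq> T" "finite T0" "z \<in> gen K scal T0"
    using gen_finite_support by (metis IntE)
  let ?U = "S0 \<union> T0"
  have U: "finite ?U" "?U \<subseteq> A"
    using S0 T0 assms by auto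
  have gen_U: "gen K scal S0 \<subseteq> gen K scal ?U" "gen K scal T0 \<subseteq> gen K scal ?U"
    by (simp_all add: gen_mono)
  have "\<exists>H. is_hom_on (gen K scal ?U) H \<and> (\<forall>s\<in>?U. H s = (if s \<in> S0 then s else 0))"
    by (rule free_hom_extension[OF U]) (use U A_subset_X in auto)
  then obtain H where H: "is_hom_on (gen K scal ?U) H"
    and H_U: "\<And>s. s \<in> ?U \<Longrightarrow> H s = (if s \<in> S0 then s else 0)"
    by blast
  have disjoint: "s \<notin> S0" if "s \<in> T0" for s
    using that S0(1) T0(1) assms(3) by blast
  have "H z = z"
    using hom_eq_on_gen[OF H is_hom_on_id gen_U(1) _ S0(3)] H_U by auto
  moreover have "H z = 0"
    using hom_eq_on_gen[OF H is_hom_on_zero gen_U(2) _ T0(3)] H_U disjoint by auto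
  ultimately show "z \<in> {0}"
    by simp
qed

text \<open>The inverse substitution is \<open>c \<mapsto> (c - b c) / t c\<close>; it works because each \<open>b c\<close> only
  involves the generators that are kept fixed.\<close>

lemma triangular_automorphism:
  assumes S: "finite S" "S \<subseteq> A"
    and t: "\<And>c. c \<in> S \<inter> C \<Longrightarrow> t c \<noteq> 0"
    and b: "\<And>c. c \<in> S \<inter> C \<Longrightarrow> b c \<in> gen K scal (S - C)"
  shows "\<exists>H H'. is_hom_on (gen K scal S) H
    \<and> (\<forall>c\<in>S \<inter> C. H c = scal (complex_of_real (t c)) c + b c)
    \<and> (\<forall>y\<in>gen K scal S. H' (H y) = y) \<and> (\<forall>y\<in>gen K scal (S - C). H' y = y)"
proof -
  let ?t = "\<lambda>c. complex_of_real (t c)" and ?t' = "\<lambda>c. 1 / complex_of_real (t c)"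
  have SX: "S \<subseteq> X"
    using S A_subset_X by blast
  have gen_S: "gen K scal S \<subseteq> X" "gen K scal (S - C) \<subseteq> gen K scal S"
    by (simp_all add: gen_subset_X[OF SX] gen_mono)
  have S_gen: "\<And>s. s \<in> S \<Longrightarrow> s \<in> gen K scal S"
    using gen_superset by blast
  have b_gen: "\<And>c. c \<in> S \<inter> C \<Longrightarrow> b c \<in> gen K scal S"
    using b gen_S(2) by blast
  have b_X: "\<And>c. c \<in> S \<inter> C \<Longrightarrow> b c \<in> X"
    using b_gen gen_S(1) by blast
  have "\<exists>H. is_hom_on (gen K scal S) H \<and> (\<forall>s\<in>S. H s = (if s \<in> C then scal (?t s) s + b s else s))"
    by (rule free_hom_extension[OF S]) (use SX b_X in \<open>auto intro!: X_add X_scal\<close>)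
  then obtain H where H: "is_hom_on (gen K scal S) H"
    and H_S: "\<And>s. s \<in> S \<Longrightarrow> H s = (if s \<in> C then scal (?t s) s + b s else s)"
    by blast
  have "\<exists>H'. is_hom_on (gen K scal S) H' \<and> (\<forall>s\<in>S. H' s = (if s \<in> C then scal (?t' s) (s - b s) else s))"
    by (rule free_hom_extension[OF S]) (use SX b_X in \<open>auto intro!: X_diff X_scal K_divide\<close>)
  then obtain H' where H': "is_hom_on (gen K scal S) H'"
    and H'_S: "\<And>s. s \<in> S \<Longrightarrow> H' s = (if s \<in> C then scal (?t' s) (s - b s) else s)"
    by blast
  have H'_fixes: "H' y = y" if "y \<in> gen K scal (S - C)" for y
    using hom_eq_on_gen[OF H' is_hom_on_id gen_S(2) _ that] H'_S by auto
  have H_into: "H s \<in> gen K scal S" if "s \<in> S" for s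
    using that H_S S_gen b_gen by (auto intro!: gen_add gen_scal)
  have "H' (H s) = s" if s: "s \<in> S" for s
  proof (cases "s \<in> C")
    case True
    then have "H' (H s) = scal (?t s) (H' s) + H' (b s)"
      using s H_S hom_add[OF H'] hom_scal[OF H'] S_gen b_gen by (simp add: gen_scal)
    also have "\<dots> = s"
      using True s t H'_S H'_fixes b SX b_X by (simp add: scal_inverse_cancel X_diff subset_iff)
    finally show ?thesis .
  qed (use s H_S H'_S in simp)
  then have "H' (H y) = y" if "y \<in> gen K scal S" for y
    using hom_inverse_on_gen[OF H H' H_into _ that] by blast
  then show ?thesis
    using H H_S H'_fixes by (intro exI[of _ H] exI[of _ H']) auto
qed

end

section \<open>Perturbed generators\<close>

locale perturbed_generators = free_generators +
  fixes B C :: "'a set" and t :: "'a \<Rightarrow> real" and b :: "'a \<Rightarrow> 'a"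
  assumes partition: "B \<union> C = A" "B \<inter> C = {}"
    and t_nonzero: "\<And>c. c \<in> C \<Longrightarrow> t c \<noteq> 0"
    and b_in: "\<And>c. c \<in> C \<Longrightarrow> b c \<in> insert 0 B"
begin

definition perturb :: "'a \<Rightarrow> 'a" where
  "perturb c = scal (complex_of_real (t c)) c + b c"

lemma perturb_in_X: "c \<in> C \<Longrightarrow> perturb c \<in> X"
  unfolding perturb_def using b_in[of c] partition A_subset_X by (auto intro!: X_add X_scal)

lemma perturb_extends_to_automorphism:
  assumes T: "finite T" "T \<subseteq> C" and B0: "finite B0" "B0 \<subseteq> B"
  shows "\<exists>S H H'. S \<subseteq> A \<and> T \<union> B0 \<subseteq> S
    \<and> is_hom_on (gen K scal S) H \<and> (\<forall>c\<in>T. H c = perturb c)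
    \<and> (\<forall>y\<in>gen K scal S. H' (H y) = y) \<and> (\<forall>y\<in>gen K scal (S \<inter> B). H' y = y)"
proof -
  define S where "S = T \<union> (b ` T \<inter> B) \<union> B0"
  have S: "finite S" "S \<subseteq> A" "T \<union> B0 \<subseteq> S" "S \<inter> C = T" "S - C = S \<inter> B"
    unfolding S_def using T B0 partition by auto
  have t: "\<And>c. c \<in> S \<inter> C \<Longrightarrow> t c \<noteq> 0"
    using t_nonzero by blast
  have b: "b c \<in> gen K scal (S - C)" if "c \<in> S \<inter> C" for c
  proof -
    have "b c \<in> insert 0 (S - C)"
      using that b_in[of c] S(4,5) unfolding S_def by auto
    then show ?thesis
      using gen_superset[of "S - C" K scal] by auto
  qed
  obtain H H' where "is_hom_on (gen K scal S) H"
    "\<forall>c\<in>S \<inter> C. H c = scal (complex_of_real (t c)) c + b c"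
    "\<forall>y\<in>gen K scal S. H' (H y) = y" "\<forall>y\<in>gen K scal (S - C). H' y = y"
    using triangular_automorphism[where t = t and b = b, OF S(1,2) t b] by blast
  then show ?thesis
    using S by (intro exI[of _ S] exI[of _ H] exI[of _ H']) (auto simp: perturb_def)
qed

lemma inj_on_perturb: "inj_on perturb C"
proof (rule inj_onI)
  fix c c' assume cc': "c \<in> C" "c' \<in> C" "perturb c = perturb c'"
  obtain S H H' where S: "{c, c'} \<subseteq> S" and H: "\<forall>c0\<in>{c, c'}. H c0 = perturb c0"
    and inv: "\<forall>y\<in>gen K scal S. H' (H y) = y"
    using perturb_extends_to_automorphism[of "{c, c'}" "{}"] cc' by auto
  have "c \<in> gen K scal S" "c' \<in> gen K scal S"
    using S gen_superset by blast+
  then show "c = c'"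
    using inv H cc'(3) by (metis insertCI)
qed

lemma is_SFG_perturb: "is_SFG K scal (perturb ` C)"
  unfolding is_SFG_def
proof (intro allI ballI impI)
  fix n P y assume P: "P \<in> poly_n K n"
    and y: "P \<noteq> (\<lambda>_. 0) \<and> (\<forall>i<n. y i \<in> perturb ` C) \<and> inj_on y {..<n}"
  have "\<forall>i<n. \<exists>c. c \<in> C \<and> y i = perturb c"
    using y by blast
  then obtain c where c: "\<forall>i<n. c i \<in> C \<and> y i = perturb (c i)"
    by metis
  have c_inj: "inj_on c {..<n}"
  proof (rule inj_onI)
    fix i j assume ij: "i \<in> {..<n}" "j \<in> {..<n}" "c i = c j"
    then have "y i = y j"
      using c by simp
    then show "i = j"
      using y ij(1,2) by (meson inj_onD)
  qed
  have "c ` {..<n} \<subseteq> C"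
    using c by blast
  then obtain S H H' where S: "S \<subseteq> A" "c ` {..<n} \<subseteq> S" and H: "is_hom_on (gen K scal S) H"
    and H_perturb: "\<forall>c0\<in>c ` {..<n}. H c0 = perturb c0"
    and inv: "\<forall>y\<in>gen K scal S. H' (H y) = y"
    using perturb_extends_to_automorphism[of "c ` {..<n}" "{}"] by auto
  have H_inj: "inj_on H (gen K scal S)"
    using inv by (metis inj_onI)
  have c_S: "\<And>i. i < n \<Longrightarrow> c i \<in> S"
    using S(2) by blast
  have "poly_eval scal n P (\<lambda>i. H (c i)) \<noteq> 0"
    using y by (intro poly_eval_hom_free_nonzero[where x = c, OF H H_inj S(1) P _ c_S c_inj]) simp
  moreover have "poly_eval scal n P y = poly_eval scal n P (\<lambda>i. H (c i))"
    using c H_perturb by (intro poly_eval_cong) simp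
  ultimately show "poly_eval scal n P y \<noteq> 0"
    by simp
qed

text \<open>A common element is fixed by the inverse automorphism, which also pulls it back into the
  subalgebra generated by \<open>C\<close>.\<close>

lemma gen_perturb_Int_gen_B: "gen K scal (perturb ` C) \<inter> gen K scal B \<subseteq> {0}"
proof
  fix z assume z: "z \<in> gen K scal (perturb ` C) \<inter> gen K scal B"
  obtain F0 where F0: "F0 \<subseteq> perturb ` C" "finite F0" "z \<in> gen K scal F0"
    using gen_finite_support[of z K scal "perturb ` C"] z by blast
  obtain B0 where B0: "B0 \<subseteq> B" "finite B0" "z \<in> gen K scal B0"
    using gen_finite_support[of z K scal B] z by blast
  obtain T where T: "T \<subseteq> C" "finite T" "F0 = perturb ` T"
    using finite_subset_image[OF F0(2,1)] by blast
  obtain S H H' where S: "T \<union> B0 \<subseteq> S" and H: "is_hom_on (gen K scal S) H"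
    and H_perturb: "\<forall>c\<in>T. H c = perturb c"
    and inv: "\<forall>y\<in>gen K scal S. H' (H y) = y" and fix_B: "\<forall>y\<in>gen K scal (S \<inter> B). H' y = y"
    using perturb_extends_to_automorphism[OF T(2,1) B0(2,1)] by blast
  have gen_T: "gen K scal T \<subseteq> gen K scal S"
    using S by (simp add: gen_mono)
  have "H ` T = F0"
    using T(3) H_perturb by simp
  then obtain w where w: "w \<in> gen K scal T" "z = H w"
    using gen_image_subset_image_gen[OF H gen_T] F0(3) by blast
  have "gen K scal B0 \<subseteq> gen K scal (S \<inter> B)"
    using B0(1) S by (intro gen_mono) blast
  then have "H' z = z"
    using fix_B B0(3) by blast
  moreover have "H' z = w"
    using inv gen_T w by blast
  ultimately have "z \<in> gen K scal C"
    using w(1) gen_mono[OF T(1), of K scal] by (metis subsetD)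
  moreover have "gen K scal C \<inter> gen K scal B \<subseteq> {0}"
    using partition by (intro gen_Int_gen_free) auto
  ultimately show "z \<in> {0}"
    using z by blast
qed

lemma gen_perturb_subset_X: "gen K scal (perturb ` C) \<subseteq> X"
  using perturb_in_X by (intro gen_subset_X) blast

lemma gen_subset_gen_perturb_Un_B: "gen K scal A \<subseteq> gen K scal (perturb ` C \<union> B)"
proof -
  let ?G = "gen K scal (perturb ` C \<union> B)"
  have "c \<in> ?G" if c: "c \<in> C" for c
  proof -
    have "perturb c \<in> ?G" "b c \<in> ?G"
      using c b_in[OF c] gen_superset[of "perturb ` C \<union> B" K scal] by auto
    then have "scal (1 / complex_of_real (t c)) (perturb c + - b c) \<in> ?G"
      by (intro gen_scal gen_add gen_uminus K_divide) simp_all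
    moreover have "scal (1 / complex_of_real (t c)) (perturb c + - b c) = c"
      using c t_nonzero partition A_subset_X by (auto simp: perturb_def scal_inverse_cancel)
    ultimately show ?thesis
      by simp
  qed
  then have "A \<subseteq> ?G"
    using partition gen_superset[of "perturb ` C \<union> B" K scal] by blast
  then show ?thesis
    by (rule gen_least[OF _ gen_is_subalgebra])
qed

end

section \<open>Topology\<close>

lemma closure_of_closed_under_binop:
  assumes cont: "continuous_on (X \<times> X) (\<lambda>(x, y). g x y)" and g_X: "\<And>x y. x \<in> X \<Longrightarrow> y \<in> X \<Longrightarrow> g x y \<in> X"
    and g_Z: "\<And>x y. x \<in> Z \<Longrightarrow> y \<in> Z \<Longrightarrow> g x y \<in> Z"
    and x: "x \<in> top_of_set X closure_of Z" and y: "y \<in> top_of_set X closure_of Z"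
  shows "g x y \<in> top_of_set X closure_of Z"
proof -
  have "continuous_map (prod_topology (top_of_set X) (top_of_set X)) (top_of_set X) (\<lambda>(x, y). g x y)"
    using cont g_X by auto
  then have "(\<lambda>(x, y). g x y) ` (prod_topology (top_of_set X) (top_of_set X) closure_of (Z \<times> Z))
      \<subseteq> top_of_set X closure_of ((\<lambda>(x, y). g x y) ` (Z \<times> Z))"
    by (rule continuous_map_image_closure_subset)
  also have "\<dots> \<subseteq> top_of_set X closure_of Z"
    using g_Z by (intro closure_of_mono) auto
  finally show ?thesis
    using x y unfolding closure_of_Times by blast
qed

lemma closure_of_closed_under_map:
  assumes cont: "continuous_on X g" and g_X: "g ` X \<subseteq> X" and g_Z: "g ` Z \<subseteq> Z"
    and x: "x \<in> top_of_set X closure_of Z"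
  shows "g x \<in> top_of_set X closure_of Z"
proof -
  have "continuous_map (top_of_set X) (top_of_set X) g"
    using cont g_X by auto
  then have "g ` (top_of_set X closure_of Z) \<subseteq> top_of_set X closure_of (g ` Z)"
    by (rule continuous_map_image_closure_subset)
  also have "\<dots> \<subseteq> top_of_set X closure_of Z"
    using g_Z by (rule closure_of_mono)
  finally show ?thesis
    using x by blast
qed

lemma in_closure_of_base:
  assumes "is_base_of X Bs" "x \<in> X" "\<And>V. V \<in> Bs \<Longrightarrow> x \<in> V \<Longrightarrow> V \<inter> Z \<noteq> {}"
  shows "x \<in> top_of_set X closure_of Z"
  unfolding in_closure_of
proof (intro conjI allI impI)
  show "x \<in> topspace (top_of_set X)"
    using assms(2) by simp
  fix U assume U: "x \<in> U \<and> openin (top_of_set X) U"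
  then obtain Vs where "Vs \<subseteq> Bs" "U = \<Union>Vs"
    using assms(1) unfolding is_base_of_def by blast
  then obtain V where "V \<in> Bs" "x \<in> V" "V \<subseteq> U"
    using U by blast
  then show "\<exists>y. y \<in> Z \<and> y \<in> U"
    using assms(3) by blast
qed

locale comm_top_algebra =
  fixes K :: "complex set" and scal :: "complex \<Rightarrow> 'a::{comm_ring_1,topological_space} \<Rightarrow> 'a"
    and X :: "'a set"
  assumes K: "K = \<real> \<or> K = UNIV"
    and top_algebra: "is_comm_top_algebra K scal X"
begin

sublocale comm_algebra_K K scal X
  using K top_algebra unfolding is_comm_top_algebra_def by unfold_locales auto

lemma
  shows continuous_on_add: "continuous_on (X \<times> X) (\<lambda>(x, y). x + y)"
    and continuous_on_mult: "continuous_on (X \<times> X) (\<lambda>(x, y). x * y)"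
    and continuous_on_scal: "continuous_on (K \<times> X) (\<lambda>(k, x). scal k x)"
  using top_algebra unfolding is_comm_top_algebra_def by blast+

lemma continuous_on_scal_right:
  assumes "k \<in> K"
  shows "continuous_on X (scal k)"
proof -
  have "continuous_on X (\<lambda>x. (k, x))"
    by (intro continuous_intros)
  then show ?thesis
    using continuous_on_compose2[OF continuous_on_scal, of X "\<lambda>x. (k, x)"] assms by auto
qed

lemma closure_of_subalgebra:
  assumes Z: "is_subalgebra K scal Z"
  shows "is_subalgebra K scal (top_of_set X closure_of Z)"
proof -
  let ?cl = "top_of_set X closure_of Z"
  have Z_ops: "\<And>x y. x \<in> Z \<Longrightarrow> y \<in> Z \<Longrightarrow> x + y \<in> Z \<and> x * y \<in> Z"
    "\<And>k. k \<in> K \<Longrightarrow> scal k ` Z \<subseteq> Z"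
    using Z unfolding is_subalgebra_def by auto
  have scal_cl: "scal k x \<in> ?cl" if "k \<in> K" "x \<in> ?cl" for k x
    using closure_of_closed_under_map[OF continuous_on_scal_right _ Z_ops(2)] that X_scal by blast
  show ?thesis
    unfolding is_subalgebra_def
  proof (intro conjI ballI)
    show "0 \<in> ?cl"
      using Z closure_of_subset_Int[of "top_of_set X" Z] unfolding is_subalgebra_def by auto
    fix x y assume "x \<in> ?cl" "y \<in> ?cl"
    then show "x + y \<in> ?cl" "x * y \<in> ?cl"
      using closure_of_closed_under_binop[OF continuous_on_add X_add, of Z]
        closure_of_closed_under_binop[OF continuous_on_mult X_mult, of Z] Z_ops(1) by simp_all
  next
    fix x assume x: "x \<in> ?cl"
    then have "x \<in> X"
      using closure_of_subset_topspace by fastforce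
    then show "- x \<in> ?cl"
      using scal_cl[of "-1" x] x scal_minus_one by simp
  qed (rule scal_cl)
qed

lemma dense_if_meets_basic_opens:
  assumes Z: "is_subalgebra K scal Z" "Z \<subseteq> X" and base: "is_base_of X Bs"
    and X_gen: "X \<subseteq> gen K scal (S \<union> B)" and S: "S \<subseteq> Z" and B: "B \<subseteq> X"
    and meets: "\<And>V. V \<in> Bs \<Longrightarrow> V \<inter> B \<noteq> {} \<Longrightarrow> V \<inter> Z \<noteq> {}"
  shows "top_of_set X closure_of Z = X"
proof -
  have "B \<subseteq> top_of_set X closure_of Z"
    using in_closure_of_base[OF base] B meets by blast
  moreover have "S \<subseteq> top_of_set X closure_of Z"
    using S Z(2) closure_of_subset[of Z "top_of_set X"] by auto
  ultimately have "gen K scal (S \<union> B) \<subseteq> top_of_set X closure_of Z"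
    by (intro gen_least closure_of_subalgebra[OF Z(1)]) auto
  then show ?thesis
    using X_gen closure_of_subset_topspace[of "top_of_set X" Z] by auto
qed

lemma exists_real_scaled_in_open:
  assumes V: "openin (top_of_set X) V" and b: "b \<in> V" and c: "c \<in> X"
  shows "\<exists>t::real. t \<noteq> 0 \<and> scal (complex_of_real t) c + b \<in> V"
proof -
  obtain T where T: "open T" "V = X \<inter> T"
    using V unfolding openin_open by blast
  define g where "g t = scal (complex_of_real t) c + b" for t :: real
  have b_X: "b \<in> X"
    using b T by blast
  have "continuous_on UNIV (\<lambda>t::real. (complex_of_real t, c))"
    by (intro continuous_intros)
  moreover have "range (\<lambda>t::real. (complex_of_real t, c)) \<subseteq> K \<times> X"
    using c by auto
  ultimately have "continuous_on UNIV (\<lambda>t::real. (\<lambda>(k, x). scal k x) (complex_of_real t, c))"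
    by (rule continuous_on_compose2[OF continuous_on_scal])
  then have "continuous_on UNIV (\<lambda>t::real. scal (complex_of_real t) c)"
    by simp
  then have "continuous_on UNIV (\<lambda>t::real. (scal (complex_of_real t) c, b))"
    by (intro continuous_intros)
  moreover have "range (\<lambda>t::real. (scal (complex_of_real t) c, b)) \<subseteq> X \<times> X"
    using c b_X by (auto intro: X_scal)
  ultimately have "continuous_on UNIV (\<lambda>t::real. (\<lambda>(x, y). x + y) (scal (complex_of_real t) c, b))"
    by (rule continuous_on_compose2[OF continuous_on_add])
  then have "continuous_on UNIV g"
    unfolding g_def by simp
  then have "open (g -` T)"
    using T(1) by (simp add: open_vimage)
  moreover have "0 \<in> g -` T"
    using b T scal_zero_left[OF c] unfolding g_def by simp
  ultimately obtain e where e: "e > 0" "ball 0 e \<subseteq> g -` T"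
    using open_contains_ball by blast
  define t where "t = e / 2"
  have "t \<in> ball 0 e" "t \<noteq> 0"
    using e(1) by (simp_all add: t_def)
  then have "g t \<in> T"
    using e(2) by blast
  moreover have "g t \<in> X"
    unfolding g_def using c b_X by (intro X_add X_scal) simp_all
  ultimately show ?thesis
    using T(2) \<open>t \<noteq> 0\<close> unfolding g_def by blast
qed

text \<open>One perturbed generator for each basic open set meeting \<open>B\<close>: this is where the bound
  on the weight of \<open>X\<close> by \<open>|C|\<close> enters.\<close>

lemma exists_perturbation:
  assumes base: "is_base_of X Bs" "Bs \<subseteq> f ` C" and C_X: "C \<subseteq> X"
  shows "\<exists>t b. (\<forall>c\<in>C. t c \<noteq> 0 \<and> b c \<in> insert 0 B)
    \<and> (\<forall>V\<in>Bs. V \<inter> B \<noteq> {} \<longrightarrow> (\<exists>c\<in>C. scal (complex_of_real (t c)) c + b c \<in> V))"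
proof -
  have "\<exists>tb. fst tb \<noteq> 0 \<and> snd tb \<in> insert 0 B
      \<and> (f c \<in> Bs \<and> f c \<inter> B \<noteq> {} \<longrightarrow> scal (complex_of_real (fst tb)) c + snd tb \<in> f c)"
    if c: "c \<in> C" for c
  proof (cases "f c \<in> Bs \<and> f c \<inter> B \<noteq> {}")
    case True
    then obtain b where b: "b \<in> f c \<inter> B"
      by blast
    moreover have "openin (top_of_set X) (f c)"
      using True base(1) unfolding is_base_of_def by blast
    ultimately obtain t where "t \<noteq> 0" "scal (complex_of_real t) c + b \<in> f c"
      using exists_real_scaled_in_open c C_X by blast
    then show ?thesis
      using b by (intro exI[of _ "(t, b)"]) auto
  next
    case False
    then show ?thesis
      by (intro exI[of _ "(1, 0)"]) auto
  qed
  then obtain tb where tb: "\<forall>c\<in>C. fst (tb c) \<noteq> 0 \<and> snd (tb c) \<in> insert 0 B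
      \<and> (f c \<in> Bs \<and> f c \<inter> B \<noteq> {} \<longrightarrow> scal (complex_of_real (fst (tb c))) c + snd (tb c) \<in> f c)"
    by metis
  have "\<exists>c\<in>C. scal (complex_of_real (fst (tb c))) c + snd (tb c) \<in> V" if "V \<in> Bs" "V \<inter> B \<noteq> {}" for V
    using that base(2) tb by blast
  then show ?thesis
    using tb by (intro exI[of _ "\<lambda>c. fst (tb c)"] exI[of _ "\<lambda>c. snd (tb c)"]) auto
qed

end

theorem theorem4p3:
  fixes K :: "complex set" and scal :: "complex \<Rightarrow> 'a::{comm_ring_1,topological_space} \<Rightarrow> 'a"
    and X A B C :: "'a set"
  assumes K: "K = \<real> \<or> K = UNIV"
    and top: "is_comm_top_algebra K scal X"
    and sfg: "is_SFG K scal A"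
    and XA: "X = gen K scal A"
    and part: "B \<union> C = A" "B \<inter> C = {}"
    and inf: "infinite C"
    and weight: "\<exists>Bs f. is_base_of X Bs \<and> Bs \<subseteq> f ` C"
  shows "\<exists>F. F \<subseteq> X \<and> is_SFG K scal F \<and> (\<exists>g. bij_betw g C F)
           \<and> (subtopology euclidean X) closure_of (gen K scal F) = X
           \<and> gen K scal F \<subseteq> (X - gen K scal B) \<union> {0}"
proof -
  interpret comm_top_algebra K scal X
    using K top by unfold_locales
  obtain Bs f where base: "is_base_of X Bs" "Bs \<subseteq> f ` C"
    using weight by blast
  have A_X: "A \<subseteq> X"
    using XA gen_superset by blast
  then obtain t b where tb: "\<forall>c\<in>C. t c \<noteq> 0 \<and> b c \<in> insert 0 B"
    and hits: "\<forall>V\<in>Bs. V \<inter> B \<noteq> {} \<longrightarrow> (\<exists>c\<in>C. scal (complex_of_real (t c)) c + b c \<in> V)"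
    using exists_perturbation[OF base, of B] part by blast
  interpret perturbed_generators K scal X A B C t b
    using K comm_algebra sfg A_X part tb by unfold_locales auto
  let ?F = "perturb ` C"
  have "top_of_set X closure_of gen K scal ?F = X"
  proof (rule dense_if_meets_basic_opens[OF gen_is_subalgebra gen_perturb_subset_X base(1)])
    show "X \<subseteq> gen K scal (?F \<union> B)"
      unfolding XA by (rule gen_subset_gen_perturb_Un_B)
    show "?F \<subseteq> gen K scal ?F" "B \<subseteq> X"
      using gen_superset A_X part by blast+
    show "V \<inter> gen K scal ?F \<noteq> {}" if "V \<in> Bs" "V \<inter> B \<noteq> {}" for V
      using that hits gen_superset[of ?F K scal] unfolding perturb_def by blast
  qed
  moreover have "bij_betw perturb C ?F"
    by (simp add: bij_betw_def inj_on_perturb)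
  moreover have "gen K scal ?F \<subseteq> (X - gen K scal B) \<union> {0}"
    using gen_perturb_subset_X gen_perturb_Int_gen_B by blast
  ultimately show ?thesis
    using perturb_in_X is_SFG_perturb by blast
qed

end
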